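(* For every $n\ge1$: if $\pi\in\mathfrak{S}_n(312)$ then $\mathsf{adi}\,\pi=(2\text{-}13)\pi$; and if $\pi\in\mathfrak{S}_n(231)$ then $\mathsf{adi}^*\,\pi=(13\text{-}2)\pi$.
   Context: $\mathfrak{S}_n(\tau)$: permutations of $[n]$ avoiding the classical pattern $\tau$. $(2\text{-}13)\pi=\#\{(i,j):j<i<n,\ \pi(i)<\pi(j)<\pi(i+1)\}$; $(13\text{-}2)\pi=\#\{(i,j):i+1<j\le n,\ \pi(i)<\pi(j)<\pi(i+1)\}$. Admissible inversions: set $\pi(n+1)=0$; an inversion pair $(\pi(i),\pi(j))$ ($1\le i<j\le n$, $\pi(i)>\pi(j)$) is admissible if $\pi(j)<\pi(j+1)$ or there is $l$ with $i<l<j$ and $\pi(l)<\pi(j)$; $\mathsf{adi}\,\pi$ counts them. Star admissible: set $\pi(0)=n+1$; an inversion pair $(\pi(i),\pi(j))$ with $i<j$ is star admissible if $\pi(i-1)<\pi(i)$ or there is $l$ with $i<l<j$ and $\pi(l)>\pi(i)$; $\mathsf{adi}^*\,\pi$ counts them. *)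

theory Defs
  imports "HOL-Combinatorics.Permutations"
begin

text \<open>Permutations of [n] are functions nat => nat that permute {1..n}
  (so pi i = i outside {1..n}). A classical pattern tau of length k is a
  permutation of {1..k}.\<close>

definition contains_pattern :: "(nat \<Rightarrow> nat) \<Rightarrow> nat \<Rightarrow> (nat \<Rightarrow> nat) \<Rightarrow> nat \<Rightarrow> bool" where
  "contains_pattern p n tau k \<longleftrightarrow>
     (\<exists>idx :: nat \<Rightarrow> nat. strict_mono_on {1..k} idx \<and> idx ` {1..k} \<subseteq> {1..n} \<and>
        (\<forall>a\<in>{1..k}. \<forall>b\<in>{1..k}. p (idx a) < p (idx b) \<longleftrightarrow> tau a < tau b))"

definition avoids :: "(nat \<Rightarrow> nat) \<Rightarrow> nat \<Rightarrow> (nat \<Rightarrow> nat) \<Rightarrow> nat \<Rightarrow> bool" where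
  "avoids p n tau k \<longleftrightarrow> \<not> contains_pattern p n tau k"

definition av_perms :: "nat \<Rightarrow> (nat \<Rightarrow> nat) \<Rightarrow> nat \<Rightarrow> (nat \<Rightarrow> nat) set" where
  "av_perms n tau k = {p. p permutes {1..n} \<and> avoids p n tau k}"

definition pat312 :: "nat \<Rightarrow> nat" where
  "pat312 i = (if i = 1 then 3 else if i = 2 then 1 else if i = 3 then 2 else i)"

definition pat231 :: "nat \<Rightarrow> nat" where
  "pat231 i = (if i = 1 then 2 else if i = 2 then 3 else if i = 3 then 1 else i)"

definition st_2_13 :: "(nat \<Rightarrow> nat) \<Rightarrow> nat \<Rightarrow> nat" where
  "st_2_13 p n = card {(i, j). 1 \<le> j \<and> j < i \<and> i < n \<and> p i < p j \<and> p j < p (i + 1)}"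

definition st_13_2 :: "(nat \<Rightarrow> nat) \<Rightarrow> nat \<Rightarrow> nat" where
  "st_13_2 p n = card {(i, j). 1 \<le> i \<and> i + 1 < j \<and> j \<le> n \<and> p i < p j \<and> p j < p (i + 1)}"

definition ext_end :: "(nat \<Rightarrow> nat) \<Rightarrow> nat \<Rightarrow> nat \<Rightarrow> nat" where
  "ext_end p n i = (if i = n + 1 then 0 else p i)"

definition ext_start :: "(nat \<Rightarrow> nat) \<Rightarrow> nat \<Rightarrow> nat \<Rightarrow> nat" where
  "ext_start p n i = (if i = 0 then n + 1 else p i)"

definition adi :: "(nat \<Rightarrow> nat) \<Rightarrow> nat \<Rightarrow> nat" where
  "adi p n = card {(i, j). 1 \<le> i \<and> i < j \<and> j \<le> n \<and> p i > p j \<and>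
      (ext_end p n j < ext_end p n (j + 1) \<or> (\<exists>l. i < l \<and> l < j \<and> p l < p j))}"

definition adi_star :: "(nat \<Rightarrow> nat) \<Rightarrow> nat \<Rightarrow> nat" where
  "adi_star p n = card {(i, j). 1 \<le> i \<and> i < j \<and> j \<le> n \<and> p i > p j \<and>
      (ext_start p n (i - 1) < ext_start p n i \<or> (\<exists>l. i < l \<and> l < j \<and> p l > p i))}"

end

theory Submission
  imports Defs
begin

text \<open>In a 312-avoiding permutation an inversion \<open>(\<pi>(i), \<pi>(j))\<close> cannot be admissible through a
  smaller letter \<open>\<pi>(l) < \<pi>(j)\<close> between the two, since \<open>\<pi>(i) \<pi>(l) \<pi>(j)\<close> would be a 312; so it is
  admissible exactly when \<open>\<pi>(j) < \<pi>(j+1)\<close>, and then \<open>\<pi>(i) < \<pi>(j+1)\<close>, as otherwise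
  \<open>\<pi>(i) \<pi>(j) \<pi>(j+1)\<close> is a 312. Hence admissible inversions are the (2-13) occurrences
  with the two indices swapped. Dually, in a 231-avoiding permutation the star admissible
  inversions \<open>(i, j)\<close> are exactly the pairs with \<open>\<pi>(i-1) < \<pi>(j) < \<pi>(i)\<close>, i.e. the (13-2)
  occurrences \<open>(i-1, j)\<close>.\<close>

lemma avoids_312D:
  assumes "avoids p n pat312 3" "1 \<le> a" "a < b" "b < c" "c \<le> n"
  shows "\<not> (p b < p c \<and> p c < p a)"
proof
  assume "p b < p c \<and> p c < p a"
  then have "contains_pattern p n pat312 3"
    unfolding contains_pattern_def
    by (intro exI[of _ "\<lambda>k. if k = 1 then a else if k = 2 then b else c"])
      (use assms in \<open>auto simp: strict_mono_on_def pat312_def\<close>)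
  with assms(1) show False by (simp add: avoids_def)
qed

lemma avoids_231D:
  assumes "avoids p n pat231 3" "1 \<le> a" "a < b" "b < c" "c \<le> n"
  shows "\<not> (p c < p a \<and> p a < p b)"
proof
  assume "p c < p a \<and> p a < p b"
  then have "contains_pattern p n pat231 3"
    unfolding contains_pattern_def
    by (intro exI[of _ "\<lambda>k. if k = 1 then a else if k = 2 then b else c"])
      (use assms in \<open>auto simp: strict_mono_on_def pat231_def\<close>)
  with assms(1) show False by (simp add: avoids_def)
qed

lemma admissible_inversion_iff_avoids_312:
  assumes "p permutes {1..n}" "avoids p n pat312 3"
  shows "(1 \<le> i \<and> i < j \<and> j \<le> n \<and> p i > p j \<and>
            (ext_end p n j < ext_end p n (j + 1) \<or> (\<exists>l. i < l \<and> l < j \<and> p l < p j)))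
     \<longleftrightarrow> (1 \<le> i \<and> i < j \<and> j < n \<and> p j < p i \<and> p i < p (j + 1))"
    (is "?adm \<longleftrightarrow> ?occ")
proof
  assume adm: ?adm
  then have ij: "1 \<le> i" "i < j" "j \<le> n" "p j < p i" by auto
  have "ext_end p n j < ext_end p n (j + 1)"
    using adm avoids_312D[OF assms(2) \<open>1 \<le> i\<close>, of _ j] ij by auto
  then have "j < n" "p j < p (j + 1)"
    using ij by (auto simp: ext_end_def split: if_splits)
  moreover have "p i \<noteq> p (j + 1)"
    using inj_eq[OF permutes_inj[OF assms(1)]] ij by simp
  moreover have "\<not> p (j + 1) < p i"
    using avoids_312D[OF assms(2) \<open>1 \<le> i\<close> \<open>i < j\<close>, of "j + 1"] \<open>j < n\<close> \<open>p j < p (j + 1)\<close> by auto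
  ultimately show ?occ
    using ij by auto
qed (auto simp: ext_end_def)

lemma star_admissible_inversion_iff_avoids_231:
  assumes "p permutes {1..n}" "avoids p n pat231 3"
  shows "(1 \<le> i \<and> i < j \<and> j \<le> n \<and> p i > p j \<and>
            (ext_start p n (i - 1) < ext_start p n i \<or> (\<exists>l. i < l \<and> l < j \<and> p l > p i)))
     \<longleftrightarrow> (2 \<le> i \<and> i < j \<and> j \<le> n \<and> p (i - 1) < p j \<and> p j < p i)"
    (is "?adm \<longleftrightarrow> ?occ")
proof
  assume adm: ?adm
  then have ij: "1 \<le> i" "i < j" "j \<le> n" "p j < p i" by auto
  have "ext_start p n (i - 1) < ext_start p n i"
    using adm avoids_231D[OF assms(2) \<open>1 \<le> i\<close>, of _ j] ij by auto
  moreover have "p i \<le> n" \<comment> \<open>so \<open>i = 1\<close> is excluded by the convention \<open>\<pi>(0) = n+1\<close>\<close>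
    using permutes_in_image[OF assms(1), of i] ij by auto
  ultimately have "2 \<le> i" "p (i - 1) < p i"
    using ij by (auto simp: ext_start_def split: if_splits)
  moreover have "p (i - 1) \<noteq> p j"
    using inj_eq[OF permutes_inj[OF assms(1)]] ij \<open>2 \<le> i\<close> by simp
  moreover have "\<not> p j < p (i - 1)"
    using avoids_231D[OF assms(2), of "i - 1" i j] ij \<open>2 \<le> i\<close> \<open>p (i - 1) < p i\<close> by auto
  ultimately show ?occ
    using ij by auto
qed (auto simp: ext_start_def)

lemma adi_eq_st_2_13_if_avoids_312:
  assumes "p permutes {1..n}" "avoids p n pat312 3"
  shows "adi p n = st_2_13 p n"
proof -
  let ?S = "{(i, j). 1 \<le> j \<and> j < i \<and> i < n \<and> p i < p j \<and> p j < p (i + 1)}"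
  have "{(i, j). 1 \<le> i \<and> i < j \<and> j \<le> n \<and> p i > p j \<and>
          (ext_end p n j < ext_end p n (j + 1) \<or> (\<exists>l. i < l \<and> l < j \<and> p l < p j))}
        = prod.swap ` ?S"
    using admissible_inversion_iff_avoids_312[OF assms] by force
  then show ?thesis
    unfolding adi_def st_2_13_def by (simp add: card_image)
qed

lemma adi_star_eq_st_13_2_if_avoids_231:
  assumes "p permutes {1..n}" "avoids p n pat231 3"
  shows "adi_star p n = st_13_2 p n"
proof -
  let ?A = "{(i, j). 1 \<le> i \<and> i < j \<and> j \<le> n \<and> p i > p j \<and>
    (ext_start p n (i - 1) < ext_start p n i \<or> (\<exists>l. i < l \<and> l < j \<and> p l > p i))}"
  let ?S = "{(i, j). 1 \<le> i \<and> i + 1 < j \<and> j \<le> n \<and> p i < p j \<and> p j < p (i + 1)}"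
  let ?shift = "\<lambda>(i, j). (Suc i, j :: nat)"
  have "?A = ?shift ` ?S"
  proof (rule set_eqI, clarify)
    fix i j
    have "(i, j) \<in> ?shift ` ?S" if "2 \<le> i" "(i - 1, j) \<in> ?S"
      using that image_eqI[of "(i, j)" ?shift "(i - 1, j)"] by simp
    then show "(i, j) \<in> ?A \<longleftrightarrow> (i, j) \<in> ?shift ` ?S"
      unfolding mem_Collect_eq case_prod_conv star_admissible_inversion_iff_avoids_231[OF assms]
      by auto
  qed
  moreover have "inj_on ?shift ?S"
    by (auto simp: inj_on_def)
  ultimately show ?thesis
    unfolding adi_star_def st_13_2_def by (simp add: card_image)
qed

theorem lemma3p4:
  fixes n :: nat
  assumes "n \<ge> 1"
  shows "(\<forall>p \<in> av_perms n pat312 3. adi p n = st_2_13 p n) \<and>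
         (\<forall>p \<in> av_perms n pat231 3. adi_star p n = st_13_2 p n)"
  by (auto simp: av_perms_def
      intro: adi_eq_st_2_13_if_avoids_312 adi_star_eq_st_13_2_if_avoids_231)

end
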